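(* If $d$ is a proper tree decomposition of a chordal graph $g$, then $\mathrm{bags}(d)=\mathrm{MaxClq}(g)$.
   Context: A graph is chordal if every cycle of length greater than three has a chord. $\mathrm{MaxClq}(g)$ is the set of maximal cliques of $g$ (cliques not strictly contained in another clique). A tree decomposition of $g$ is a pair $(t,\beta)$ with $t$ a tree and $\beta:V(t)\to 2^{V(g)}$ such that every node of $g$ lies in some $\beta(v)$, every edge of $g$ is contained in some $\beta(v)$, and whenever $v$ lies on the path between $u$ and $w$ in $t$, $\beta(u)\cap\beta(w)\subseteq\beta(v)$. The sets $\beta(v)$ are bags; $\mathrm{bags}(d)$ is the set of bags. Write $d_1\sqsubseteq d_2$ if every bag of $d_1$ is contained in some bag of $d_2$. $d'$ strictly subsumes $d$ if $d'\sqsubseteq d$ and $\mathrm{bags}(d)\not\subseteq\mathrm{bags}(d')$; $d$ is proper if no tree decomposition of $g$ strictly subsumes it. *)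

theory Defs
  imports Main
begin

type_synonym 'a graph = "'a set \<times> 'a set set"

definition verts :: "'a graph \<Rightarrow> 'a set" where "verts g = fst g"
definition edges :: "'a graph \<Rightarrow> 'a set set" where "edges g = snd g"

definition wf_graph :: "'a graph \<Rightarrow> bool" where
  "wf_graph g \<longleftrightarrow> finite (verts g) \<and> (\<forall>e\<in>edges g. e \<subseteq> verts g \<and> card e = 2)"

definition adj :: "'a graph \<Rightarrow> 'a \<Rightarrow> 'a \<Rightarrow> bool" where
  "adj g u v \<longleftrightarrow> {u, v} \<in> edges g"

definition is_cycle :: "'a graph \<Rightarrow> 'a list \<Rightarrow> bool" where
  "is_cycle g cs \<longleftrightarrow> length cs \<ge> 3 \<and> distinct cs \<and> set cs \<subseteq> verts g \<and>
     (\<forall>i<length cs. adj g (cs ! i) (cs ! ((i + 1) mod length cs)))"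

definition has_chord :: "'a graph \<Rightarrow> 'a list \<Rightarrow> bool" where
  "has_chord g cs \<longleftrightarrow> (\<exists>i<length cs. \<exists>j<length cs. i \<noteq> j \<and>
     j \<noteq> (i + 1) mod length cs \<and> i \<noteq> (j + 1) mod length cs \<and> adj g (cs ! i) (cs ! j))"

definition chordal :: "'a graph \<Rightarrow> bool" where
  "chordal g \<longleftrightarrow> (\<forall>cs. is_cycle g cs \<and> length cs > 3 \<longrightarrow> has_chord g cs)"

definition is_clique :: "'a graph \<Rightarrow> 'a set \<Rightarrow> bool" where
  "is_clique g C \<longleftrightarrow> C \<subseteq> verts g \<and> (\<forall>u\<in>C. \<forall>v\<in>C. u \<noteq> v \<longrightarrow> adj g u v)"

definition MaxClq :: "'a graph \<Rightarrow> 'a set set" where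
  "MaxClq g = {C. is_clique g C \<and> \<not> (\<exists>C'. is_clique g C' \<and> C \<subset> C')}"

definition is_path :: "'a graph \<Rightarrow> 'a list \<Rightarrow> bool" where
  "is_path g ps \<longleftrightarrow> ps \<noteq> [] \<and> distinct ps \<and> set ps \<subseteq> verts g \<and>
     (\<forall>i. Suc i < length ps \<longrightarrow> adj g (ps ! i) (ps ! Suc i))"

definition connected_graph :: "'a graph \<Rightarrow> bool" where
  "connected_graph g \<longleftrightarrow> (\<forall>u\<in>verts g. \<forall>w\<in>verts g.
     \<exists>ps. is_path g ps \<and> hd ps = u \<and> last ps = w)"

definition is_tree :: "'a graph \<Rightarrow> bool" where
  "is_tree t \<longleftrightarrow> wf_graph t \<and> verts t \<noteq> {} \<and> connected_graph t \<and> (\<nexists>cs. is_cycle t cs)"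

definition on_path :: "'a graph \<Rightarrow> 'a \<Rightarrow> 'a \<Rightarrow> 'a \<Rightarrow> bool" where
  "on_path t u v w \<longleftrightarrow> (\<exists>ps. is_path t ps \<and> hd ps = u \<and> last ps = w \<and> v \<in> set ps)"

definition tree_decomp :: "'a graph \<Rightarrow> 'b graph \<times> ('b \<Rightarrow> 'a set) \<Rightarrow> bool" where
  "tree_decomp g d \<longleftrightarrow> (case d of (t, \<beta>) \<Rightarrow>
     is_tree t \<and>
     (\<forall>v\<in>verts t. \<beta> v \<subseteq> verts g) \<and>
     (\<forall>x\<in>verts g. \<exists>v\<in>verts t. x \<in> \<beta> v) \<and>
     (\<forall>e\<in>edges g. \<exists>v\<in>verts t. e \<subseteq> \<beta> v) \<and>
     (\<forall>u\<in>verts t. \<forall>v\<in>verts t. \<forall>w\<in>verts t. on_path t u v w \<longrightarrow> \<beta> u \<inter> \<beta> w \<subseteq> \<beta> v))"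

definition bags :: "'b graph \<times> ('b \<Rightarrow> 'a set) \<Rightarrow> 'a set set" where
  "bags d = (case d of (t, \<beta>) \<Rightarrow> \<beta> ` verts t)"

definition subsumed :: "'b graph \<times> ('b \<Rightarrow> 'a set) \<Rightarrow> 'c graph \<times> ('c \<Rightarrow> 'a set) \<Rightarrow> bool" where
  "subsumed d1 d2 \<longleftrightarrow> (\<forall>B\<in>bags d1. \<exists>B'\<in>bags d2. B \<subseteq> B')"

definition strictly_subsumes :: "'c graph \<times> ('c \<Rightarrow> 'a set) \<Rightarrow> 'b graph \<times> ('b \<Rightarrow> 'a set) \<Rightarrow> bool" where
  "strictly_subsumes d' d \<longleftrightarrow> subsumed d' d \<and> \<not> (bags d \<subseteq> bags d')"

text \<open>Proper: no tree decomposition strictly subsumes d. Competitors are trees whose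
  nodes are natural numbers (every finite tree is isomorphic to one).\<close>
definition proper :: "'a graph \<Rightarrow> 'b graph \<times> ('b \<Rightarrow> 'a set) \<Rightarrow> bool" where
  "proper g d \<longleftrightarrow> tree_decomp g d \<and>
     \<not> (\<exists>d' :: nat graph \<times> (nat \<Rightarrow> 'a set). tree_decomp g d' \<and> strictly_subsumes d' d)"

end

theory Submission
  imports Defs
begin

text \<open>A chordal graph has a simplicial vertex (Dirac), and eliminating simplicial vertices one at a
  time builds a clique tree: a tree decomposition all of whose bags are maximal cliques. By the Helly
  property of subtrees every clique lies in a bag of every tree decomposition, so a clique tree is
  subsumed by any tree decomposition \<open>d\<close>. If \<open>d\<close> is proper, its bags are therefore maximal
  cliques; conversely each maximal clique lies in a bag of \<open>d\<close>, which, being a clique, equals it.\<close>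

fun consec :: "'a list \<Rightarrow> 'a \<Rightarrow> 'a \<Rightarrow> bool" where
  "consec (a # b # l) u v \<longleftrightarrow> (a = u \<and> b = v) \<or> consec (b # l) u v"
| "consec _ _ _ \<longleftrightarrow> False"

lemma consec_Cons: "consec (x # l) u v \<longleftrightarrow> (l \<noteq> [] \<and> u = x \<and> v = hd l) \<or> consec l u v"
  by (cases l) auto

lemma consec_nth: "consec l u v \<longleftrightarrow> (\<exists>i. Suc i < length l \<and> l ! i = u \<and> l ! Suc i = v)"
proof (induction l u v rule: consec.induct)
  case (1 a b l u v)
  show ?case
  proof
    assume "\<exists>i. Suc i < length (a # b # l) \<and> (a # b # l) ! i = u \<and> (a # b # l) ! Suc i = v"
    then obtain i where "Suc i < length (a # b # l)" "(a # b # l) ! i = u" "(a # b # l) ! Suc i = v"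
      by blast
    then show "consec (a # b # l) u v"
      using 1 by (cases i) auto
  qed (use 1 in auto)
qed auto

lemma consec_append:
  "consec (A @ B) u v \<longleftrightarrow> consec A u v \<or> consec B u v \<or> (A \<noteq> [] \<and> B \<noteq> [] \<and> u = last A \<and> v = hd B)"
  by (induction A) (auto simp: consec_Cons)

lemma consec_rev: "consec (rev l) u v \<longleftrightarrow> consec l v u"
  by (induction l) (auto simp: consec_append consec_Cons hd_rev last_rev)

lemma consec_in_set: "consec l u v \<Longrightarrow> u \<in> set l \<and> v \<in> set l"
  by (induction l u v rule: consec.induct) auto

lemma consec_propagate:
  assumes "l \<noteq> []" "P (hd l)" "\<And>y z. consec l y z \<Longrightarrow> P y \<Longrightarrow> P z"
  shows "\<forall>v\<in>set l. P v"
  using assms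
proof (induction l)
  case (Cons a l)
  then show ?case
    by (cases "l = []") (auto simp: consec_Cons)
qed simp

lemma consec_cycle_nth:
  assumes "cs \<noteq> []"
  shows "consec (cs @ [hd cs]) u v \<longleftrightarrow> (\<exists>i<length cs. cs ! i = u \<and> cs ! (Suc i mod length cs) = v)"
proof -
  have nth_cyc: "(cs @ [hd cs]) ! Suc i = cs ! (Suc i mod length cs)" if "i < length cs" for i
  proof (cases "Suc i < length cs")
    case False
    then have "Suc i = length cs" using that by simp
    then show ?thesis using assms by (simp add: nth_append hd_conv_nth)
  qed (simp add: nth_append)
  show ?thesis
    unfolding consec_nth
    by (auto simp: nth_cyc) (metis less_Suc_eq nth_append nth_cyc)+
qed

subsection \<open>Paths and cycles\<close>

lemma adj_commute: "adj g u v \<longleftrightarrow> adj g v u"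
  by (simp add: adj_def insert_commute)

lemma adj_in_verts:
  assumes "wf_graph g" "adj g u v"
  shows "u \<in> verts g \<and> v \<in> verts g \<and> u \<noteq> v"
proof -
  have "{u, v} \<subseteq> verts g" "card {u, v} = 2"
    using assms unfolding wf_graph_def adj_def by auto
  then show ?thesis by (cases "u = v") auto
qed

lemma is_path_consec:
  "is_path g l \<longleftrightarrow> l \<noteq> [] \<and> distinct l \<and> set l \<subseteq> verts g \<and> (\<forall>u v. consec l u v \<longrightarrow> adj g u v)"
  unfolding is_path_def consec_nth by blast

lemma is_cycle_consec:
  "is_cycle g cs \<longleftrightarrow> 3 \<le> length cs \<and> distinct cs \<and> set cs \<subseteq> verts g \<and>
     (\<forall>u v. consec (cs @ [hd cs]) u v \<longrightarrow> adj g u v)"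
proof (cases "cs = []")
  case False
  then show ?thesis
    unfolding is_cycle_def consec_cycle_nth[OF False] by auto
qed (simp add: is_cycle_def)

lemma is_path_rev: "is_path g l \<Longrightarrow> is_path g (rev l)"
  unfolding is_path_consec by (auto simp: consec_rev) (metis adj_commute)

lemma is_path_snoc:
  assumes "is_path g ps" "q \<notin> set ps" "q \<in> verts g" "adj g (last ps) q"
  shows "is_path g (ps @ [q])"
  using assms unfolding is_path_consec by (auto simp: consec_append)

lemma is_path_Cons:
  assumes "is_path g ps" "q \<notin> set ps" "q \<in> verts g" "adj g q (hd ps)"
  shows "is_path g (q # ps)"
  using assms unfolding is_path_consec by (auto simp: consec_Cons)

lemma has_chord_consec:
  assumes "has_chord g cs" "distinct cs"
  obtains u v where "u \<in> set cs" "v \<in> set cs" "u \<noteq> v" "adj g u v"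
    "\<not> consec (cs @ [hd cs]) u v" "\<not> consec (cs @ [hd cs]) v u"
proof -
  obtain i j where ij: "i < length cs" "j < length cs" "i \<noteq> j" "j \<noteq> (i + 1) mod length cs"
    "i \<noteq> (j + 1) mod length cs" "adj g (cs ! i) (cs ! j)"
    using assms(1) unfolding has_chord_def by blast
  have cs: "cs \<noteq> []" using ij by auto
  have not_consec: "\<not> consec (cs @ [hd cs]) (cs ! a) (cs ! b)"
    if "a < length cs" "b < length cs" "b \<noteq> (a + 1) mod length cs" for a b
  proof
    assume "consec (cs @ [hd cs]) (cs ! a) (cs ! b)"
    then obtain k where "k < length cs" "cs ! k = cs ! a" "cs ! (Suc k mod length cs) = cs ! b"
      using consec_cycle_nth[OF cs] by blast
    with that assms(2) show False
      by (metis Suc_eq_plus1 cs length_greater_0_conv mod_less_divisor nth_eq_iff_index_eq)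
  qed
  show thesis
    using that[of "cs ! i" "cs ! j"] ij not_consec assms(2) by (simp add: nth_eq_iff_index_eq)
qed

lemma path_shortcut:
  assumes p: "is_path g l" and uv: "u \<in> set l" "v \<in> set l" "u \<noteq> v" "adj g u v"
    and nc: "\<not> consec l u v" "\<not> consec l v u"
  obtains l' where "is_path g l'" "hd l' = hd l" "last l' = last l" "set l' \<subseteq> set l"
    "length l' < length l" "u \<in> set l'" "v \<in> set l'"
proof -
  note result = that
  have short: thesis
    if l: "l = A @ a # B @ b # C" and ab: "adj g a b" "\<not> consec l a b" and "{a, b} = {u, v}"
    for A B C a b
  proof (rule result)
    have "B \<noteq> []" using l ab by (auto simp: consec_append)
    then show "is_path g (A @ a # b # C)"
      using p l ab unfolding is_path_consec by (auto simp: consec_append consec_Cons)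
    show "hd (A @ a # b # C) = hd l" "last (A @ a # b # C) = last l"
      using l by (cases A; simp)+
    show "length (A @ a # b # C) < length l"
      using l \<open>B \<noteq> []\<close> by simp
  qed (use l \<open>{a, b} = {u, v}\<close> in auto)
  obtain A R where l: "l = A @ u # R" using uv split_list by metis
  show thesis
  proof (cases "v \<in> set R")
    case True
    then obtain B C where "R = B @ v # C" using split_list by metis
    then show thesis using short[of A u B v C] l uv nc by auto
  next
    case False
    then have "v \<in> set A" using uv l by auto
    then obtain A1 B where "A = A1 @ v # B" using split_list by metis
    then show thesis using short[of A1 v B u R] l uv nc adj_commute by fastforce
  qed
qed

lemma set_subset_hd_last_if_length_le_2: "length l \<le> 2 \<Longrightarrow> set l \<subseteq> {hd l, last l}"
  by (cases l; cases "tl l"; auto)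

lemma path_shortcut_chord:
  assumes p: "is_path g P" and uv: "u \<in> set P" "v \<in> set P" "u \<noteq> v" "adj g u v"
    and nc: "\<not> consec P u v" "\<not> consec P v u" and not_ends: "{u, v} \<noteq> {hd P, last P}"
  obtains P' where "is_path g P'" "hd P' = hd P" "last P' = last P" "set P' \<subseteq> set P"
    "length P' < length P" "3 \<le> length P'"
proof -
  obtain P' where P': "is_path g P'" "hd P' = hd P" "last P' = last P" "set P' \<subseteq> set P"
    "length P' < length P" "u \<in> set P'" "v \<in> set P'"
    using path_shortcut[OF p uv nc] by blast
  have "3 \<le> length P'"
  proof (rule ccontr)
    assume "\<not> 3 \<le> length P'"
    then have "{u, v} \<subseteq> {hd P, last P}"
      using set_subset_hd_last_if_length_le_2[of P'] P' by auto
    then show False using not_ends uv(3) by auto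
  qed
  with P' that show thesis by blast
qed

lemma cycle_of_two_paths:
  assumes P: "is_path g P" "hd P = x" "last P = y" and Q: "is_path g Q" "hd Q = y" "last Q = x"
    and disj: "set P \<inter> set Q = {x, y}" and len: "3 \<le> length P" "3 \<le> length Q"
  defines "cs \<equiv> butlast P @ butlast Q"
  shows "is_cycle g cs" "3 < length cs" "set cs = set P \<union> set Q"
    "consec (cs @ [hd cs]) u v \<longleftrightarrow> consec P u v \<or> consec Q u v"
proof -
  have P_snoc: "P = butlast P @ [y]" and Q_snoc: "Q = butlast Q @ [x]"
    using P Q len by (metis append_butlast_last_id list.size(3) not_numeral_le_zero)+
  have ne: "butlast P \<noteq> []" "butlast Q \<noteq> []" using len by (cases P; cases Q; auto)+
  have hd_butlast: "hd (butlast P) = x" "hd (butlast Q) = y"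
    using P(2) Q(2) ne by (metis P_snoc Q_snoc hd_append2)+
  have sP: "set P = insert y (set (butlast P))" using arg_cong[OF P_snoc, of set] by simp
  have sQ: "set Q = insert x (set (butlast Q))" using arg_cong[OF Q_snoc, of set] by simp
  have dP: "distinct (butlast P)" "y \<notin> set (butlast P)"
    using P(1) arg_cong[OF P_snoc, of distinct] unfolding is_path_def by auto
  have dQ: "distinct (butlast Q)" "x \<notin> set (butlast Q)"
    using Q(1) arg_cong[OF Q_snoc, of distinct] unfolding is_path_def by auto
  have cs_closed: "cs @ [hd cs] = butlast P @ Q"
    using ne hd_butlast Q_snoc unfolding cs_def by simp
  have "consec (butlast P @ Q) u v \<longleftrightarrow> consec (butlast P @ [y]) u v \<or> consec Q u v" for u v
    using ne Q(2) by (cases Q) (auto simp: consec_append consec_Cons)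
  then show consec_cs: "consec (cs @ [hd cs]) u v \<longleftrightarrow> consec P u v \<or> consec Q u v" for u v
    using cs_closed P_snoc by simp
  have "x \<in> set (butlast P)" "y \<in> set (butlast Q)"
    using ne hd_butlast hd_in_set by metis+
  then show set_cs: "set cs = set P \<union> set Q"
    unfolding cs_def sP sQ by auto
  show "3 < length cs" using len unfolding cs_def by simp
  show "is_cycle g cs"
    unfolding is_cycle_consec
  proof (intro conjI allI impI)
    show "3 \<le> length cs" using len unfolding cs_def by simp
    have "set (butlast P) \<inter> set (butlast Q) = {}"
      using disj dP(2) dQ(2) unfolding sP sQ by auto
    then show "distinct cs" using dP dQ unfolding cs_def by simp
    show "set cs \<subseteq> verts g" using set_cs P Q unfolding is_path_def by auto
  qed (use consec_cs P(1) Q(1) in \<open>auto simp: is_path_consec\<close>)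
qed

text \<open>Two internally disjoint \<open>x\<close>--\<open>y\<close> paths of length at least 3 whose interiors are not adjacent
  close up to a cycle of length greater than 3. For a shortest such pair, any chord other than
  \<open>xy\<close> would either shortcut one of the paths or join the two interiors.\<close>

lemma chordal_adj_of_two_paths:
  assumes ch: "chordal g"
  shows "is_path g P \<Longrightarrow> is_path g Q \<Longrightarrow> hd P = x \<Longrightarrow> last P = y \<Longrightarrow> hd Q = y \<Longrightarrow> last Q = x
    \<Longrightarrow> 3 \<le> length P \<Longrightarrow> 3 \<le> length Q \<Longrightarrow> set P \<inter> set Q = {x, y}
    \<Longrightarrow> (\<forall>u\<in>set P - {x, y}. \<forall>v\<in>set Q - {x, y}. \<not> adj g u v) \<Longrightarrow> adj g x y"
proof (induction "length P + length Q" arbitrary: P Q rule: less_induct)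
  case less
  note P = less.prems(1,3,4) and Q = less.prems(2,5,6) and len = less.prems(7,8)
    and disj = less.prems(9) and nonadj = less.prems(10)
  define cs where "cs = butlast P @ butlast Q"
  note cyc = cycle_of_two_paths[OF P Q disj len, folded cs_def]
  have "has_chord g cs" using ch cyc(1,2) unfolding chordal_def by blast
  then obtain u v where uv: "u \<in> set cs" "v \<in> set cs" "u \<noteq> v" "adj g u v"
    and nc: "\<not> consec P u v" "\<not> consec Q u v" "\<not> consec P v u" "\<not> consec Q v u"
    using has_chord_consec[of g cs] cyc(1,4) unfolding is_cycle_def by metis
  have xy: "x \<in> set P" "y \<in> set P" "x \<in> set Q" "y \<in> set Q" using disj by auto
  consider "{u, v} = {x, y}" | "u \<in> set P" "v \<in> set P" "{u, v} \<noteq> {x, y}"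
    | "u \<in> set Q" "v \<in> set Q" "{u, v} \<noteq> {x, y}"
    | "u \<in> set P - set Q" "v \<in> set Q - set P" | "v \<in> set P - set Q" "u \<in> set Q - set P"
    using uv(1,2) unfolding cyc(3) by blast
  then show ?case
  proof cases
    case 1
    then show ?thesis using uv(4) adj_commute by (metis doubleton_eq_iff)
  next
    case 2
    then have "{u, v} \<noteq> {hd P, last P}" using P(2,3) by simp
    then obtain P' where P': "is_path g P'" "hd P' = hd P" "last P' = last P" "set P' \<subseteq> set P"
      "length P' < length P" "3 \<le> length P'"
      by (rule path_shortcut_chord[OF P(1) 2(1,2) uv(3,4) nc(1,3)])
    have "x \<in> set P'" "y \<in> set P'"
      using P'(1-3) P(2,3) unfolding is_path_def by (metis hd_in_set, metis last_in_set)
    then have "set P' \<inter> set Q = {x, y}" using P'(4) disj by auto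
    moreover have "\<forall>u\<in>set P' - {x, y}. \<forall>v\<in>set Q - {x, y}. \<not> adj g u v"
      using P'(4) nonadj by blast
    moreover have "length P' + length Q < length P + length Q" using P'(5) by simp
    ultimately show ?thesis
      using less.hyps[OF _ P'(1) Q(1) P'(2,3)[unfolded P(2,3)] Q(2,3) P'(6) len(2)] by blast
  next
    case 3
    then have "{u, v} \<noteq> {hd Q, last Q}" using Q(2,3) by (simp add: insert_commute)
    then obtain Q' where Q': "is_path g Q'" "hd Q' = hd Q" "last Q' = last Q" "set Q' \<subseteq> set Q"
      "length Q' < length Q" "3 \<le> length Q'"
      by (rule path_shortcut_chord[OF Q(1) 3(1,2) uv(3,4) nc(2,4)])
    have "x \<in> set Q'" "y \<in> set Q'"
      using Q'(1-3) Q(2,3) unfolding is_path_def by (metis last_in_set, metis hd_in_set)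
    then have "set P \<inter> set Q' = {x, y}" using Q'(4) disj by auto
    moreover have "\<forall>u\<in>set P - {x, y}. \<forall>v\<in>set Q' - {x, y}. \<not> adj g u v"
      using Q'(4) nonadj by blast
    moreover have "length P + length Q' < length P + length Q" using Q'(5) by simp
    ultimately show ?thesis
      using less.hyps[OF _ P(1) Q'(1) P(2,3) Q'(2,3)[unfolded Q(2,3)] len(1) Q'(6)] by blast
  next
    case 4
    then have "u \<in> set P - {x, y}" "v \<in> set Q - {x, y}" using xy by auto
    then show ?thesis using nonadj uv(4) by metis
  next
    case 5
    then have "v \<in> set P - {x, y}" "u \<in> set Q - {x, y}" using xy by auto
    then show ?thesis using nonadj uv(4) adj_commute by metis
  qed
qed

definition induced :: "'a graph \<Rightarrow> 'a set \<Rightarrow> 'a graph" where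
  "induced g W = (W, {e \<in> edges g. e \<subseteq> W})"

lemma verts_induced [simp]: "verts (induced g W) = W"
  by (simp add: induced_def verts_def)

lemma edges_induced [simp]: "edges (induced g W) = {e \<in> edges g. e \<subseteq> W}"
  by (simp add: induced_def edges_def)

lemma adj_induced: "adj (induced g W) u v \<longleftrightarrow> adj g u v \<and> u \<in> W \<and> v \<in> W"
  by (simp add: adj_def)

lemma wf_graph_induced: "wf_graph g \<Longrightarrow> W \<subseteq> verts g \<Longrightarrow> wf_graph (induced g W)"
  unfolding wf_graph_def by (auto intro: finite_subset)

lemma is_path_induced_iff:
  assumes "W \<subseteq> verts g"
  shows "is_path (induced g W) ps \<longleftrightarrow> is_path g ps \<and> set ps \<subseteq> W"
proof
  assume "is_path (induced g W) ps"
  then show "is_path g ps \<and> set ps \<subseteq> W"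
    using assms unfolding is_path_consec adj_induced by auto
next
  assume ps: "is_path g ps \<and> set ps \<subseteq> W"
  have "adj (induced g W) u v" if "consec ps u v" for u v
    using ps that consec_in_set[OF that] unfolding is_path_consec adj_induced by blast
  then show "is_path (induced g W) ps"
    using ps unfolding is_path_consec by simp
qed

lemma is_cycle_induced: "W \<subseteq> verts g \<Longrightarrow> is_cycle (induced g W) cs \<Longrightarrow> is_cycle g cs"
  unfolding is_cycle_consec adj_induced by auto

lemma chordal_induced:
  assumes "chordal g" "W \<subseteq> verts g"
  shows "chordal (induced g W)"
  unfolding chordal_def
proof (intro allI impI)
  fix cs assume cs: "is_cycle (induced g W) cs \<and> 3 < length cs"
  then have "has_chord g cs"
    using assms is_cycle_induced unfolding chordal_def by blast
  moreover have "set cs \<subseteq> W" using cs unfolding is_cycle_def by auto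
  ultimately show "has_chord (induced g W) cs"
    unfolding has_chord_def adj_induced by (meson nth_mem subsetD)
qed

lemma is_clique_induced_delete:
  "is_clique (induced g (verts g - {x})) C \<longleftrightarrow> is_clique g C \<and> x \<notin> C"
  unfolding is_clique_def adj_induced by auto

definition reach :: "'a graph \<Rightarrow> 'a set \<Rightarrow> 'a \<Rightarrow> 'a set" where
  "reach g W a = {v. \<exists>l. is_path g l \<and> hd l = a \<and> last l = v \<and> set l \<subseteq> W}"

lemma reach_subset: "reach g W a \<subseteq> W \<inter> verts g"
  unfolding reach_def is_path_def by (auto dest: last_in_set)

lemma reach_self: "a \<in> W \<Longrightarrow> a \<in> verts g \<Longrightarrow> a \<in> reach g W a"
  unfolding reach_def by (intro CollectI exI[of _ "[a]"]) (auto simp: is_path_def)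

lemma reach_sym: "v \<in> reach g W a \<Longrightarrow> a \<in> reach g W v"
proof -
  assume "v \<in> reach g W a"
  then obtain l where l: "is_path g l" "hd l = a" "last l = v" "set l \<subseteq> W"
    unfolding reach_def by blast
  then have "l \<noteq> []" unfolding is_path_def by auto
  then show ?thesis
    using l is_path_rev unfolding reach_def by (intro CollectI exI[of _ "rev l"]) (simp add: hd_rev last_rev)
qed

lemma reach_adj_closed:
  assumes wf: "wf_graph g" and v: "v \<in> reach g W a" and w: "w \<in> W" "adj g v w"
  shows "w \<in> reach g W a"
proof -
  obtain l where l: "is_path g l" "hd l = a" "last l = v" "set l \<subseteq> W"
    using v unfolding reach_def by blast
  show ?thesis
  proof (cases "w \<in> set l")
    case True
    then obtain A B where lAB: "l = A @ w # B" using split_list by metis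
    have "is_path g (A @ [w])"
      using l(1) unfolding lAB is_path_consec by (auto simp: consec_append consec_Cons)
    moreover have "hd (A @ [w]) = a" using l(2) lAB by (cases A) auto
    ultimately show ?thesis using l lAB unfolding reach_def by (intro CollectI exI[of _ "A @ [w]"]) auto
  next
    case False
    have "is_path g (l @ [w])"
      using is_path_snoc[OF l(1) False] l(3) w adj_in_verts[OF wf w(2)] by blast
    moreover have "hd (l @ [w]) = a" using l unfolding is_path_def by simp
    ultimately show ?thesis using l w unfolding reach_def by (intro CollectI exI[of _ "l @ [w]"]) auto
  qed
qed

lemma set_path_subset_reach:
  assumes wf: "wf_graph g" and l: "is_path g l" "set l \<subseteq> W" "hd l \<in> reach g W a"
  shows "set l \<subseteq> reach g W a"
proof -
  have "\<forall>v\<in>set l. v \<in> reach g W a"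
  proof (rule consec_propagate)
    show "l \<noteq> []" using l(1) unfolding is_path_def by simp
  next
    fix y z assume yz: "consec l y z" and y: "y \<in> reach g W a"
    have "z \<in> W" using consec_in_set[OF yz] l(2) by blast
    moreover have "adj g y z" using yz l(1) unfolding is_path_consec by blast
    ultimately show "z \<in> reach g W a" by (rule reach_adj_closed[OF wf y])
  qed (fact l(3))
  then show ?thesis by blast
qed

lemma reach_trans:
  assumes wf: "wf_graph g" and "v \<in> reach g W a" "w \<in> reach g W v"
  shows "w \<in> reach g W a"
proof -
  obtain l where l: "is_path g l" "hd l = v" "last l = w" "set l \<subseteq> W"
    using assms(3) unfolding reach_def by blast
  then have "w \<in> set l" using last_in_set unfolding is_path_def by metis
  then show ?thesis using set_path_subset_reach[OF wf l(1,4)] assms(2) l(2) by blast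
qed

lemma reach_subset_closed:
  assumes "a \<in> X" and closed: "\<And>x w. x \<in> X \<Longrightarrow> w \<in> W \<Longrightarrow> adj g x w \<Longrightarrow> w \<in> X"
  shows "reach g W a \<subseteq> X"
proof
  fix v assume "v \<in> reach g W a"
  then obtain l where l: "is_path g l" "hd l = a" "last l = v" "set l \<subseteq> W"
    unfolding reach_def by blast
  have "\<forall>z\<in>set l. z \<in> X"
  proof (rule consec_propagate)
    show "l \<noteq> []" using l(1) unfolding is_path_def by simp
  next
    fix y z assume yz: "consec l y z" and y: "y \<in> X"
    have "z \<in> W" using consec_in_set[OF yz] l(4) by blast
    moreover have "adj g y z" using yz l(1) unfolding is_path_consec by blast
    ultimately show "z \<in> X" by (rule closed[OF y])
  qed (use l(2) \<open>a \<in> X\<close> in simp)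
  then show "v \<in> X" using l(1,3) unfolding is_path_def by auto
qed

subsection \<open>Simplicial vertices\<close>

definition simplicial :: "'a graph \<Rightarrow> 'a \<Rightarrow> bool" where
  "simplicial g x \<longleftrightarrow> (\<forall>y z. adj g x y \<longrightarrow> adj g x z \<longrightarrow> y \<noteq> z \<longrightarrow> adj g y z)"

definition has_simplicial_pair :: "'a graph \<Rightarrow> bool" where
  "has_simplicial_pair g \<longleftrightarrow> (\<exists>a b. a \<in> verts g \<and> b \<in> verts g \<and> a \<noteq> b \<and> \<not> adj g a b \<and>
     simplicial g a \<and> simplicial g b)"

lemma simplicial_if_simplicial_induced:
  assumes "simplicial (induced g W) c" "c \<in> W" "\<And>w. adj g c w \<Longrightarrow> w \<in> W"
  shows "simplicial g c"
  using assms unfolding simplicial_def adj_induced by blast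

lemma simplicial_in_closed_part:
  assumes XS: "X \<inter> S = {}" and x: "x \<in> X" and S: "is_clique g S"
    and closed: "\<And>c w. c \<in> X \<Longrightarrow> adj g c w \<Longrightarrow> w \<in> X \<union> S"
    and H: "is_clique (induced g (X \<union> S)) (X \<union> S) \<or> has_simplicial_pair (induced g (X \<union> S))"
  obtains c where "c \<in> X" "simplicial g c"
proof -
  let ?H = "induced g (X \<union> S)"
  have lift: "simplicial g c" if "c \<in> X" "simplicial ?H c" for c
    using simplicial_if_simplicial_induced[OF that(2)] that(1) closed by blast
  from H consider (complete) "is_clique ?H (X \<union> S)"
    | (pair) u v where "u \<in> X \<union> S" "v \<in> X \<union> S" "u \<noteq> v" "\<not> adj ?H u v" "simplicial ?H u" "simplicial ?H v"
    unfolding has_simplicial_pair_def verts_induced by blast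
  then show thesis
  proof cases
    case complete
    then have "simplicial ?H x" using x unfolding is_clique_def simplicial_def adj_induced by blast
    then show thesis using that lift x by blast
  next
    case pair
    have "\<not> (u \<in> S \<and> v \<in> S)"
      using pair S unfolding is_clique_def adj_induced by blast
    then have "u \<in> X \<or> v \<in> X" using pair by blast
    then show thesis using that lift pair by blast
  qed
qed

text \<open>Two vertices of \<open>S\<close> are joined by a path
  through \<open>a\<close> and by a path through \<open>D\<close>, so chordality makes them adjacent.\<close>

lemma separator_is_clique:
  assumes ch: "chordal g" and wf: "wf_graph g"
    and W: "W = verts g - insert a {y. adj g a y}" and D: "D = reach g W b"
    and S: "S = {s \<in> verts g - D. \<exists>d\<in>D. adj g s d}"
  shows "S \<subseteq> {y. adj g a y}" "is_clique g S"
proof -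
  have DW: "D \<subseteq> W" using reach_subset unfolding D by (rule le_infE)
  show SN: "S \<subseteq> {y. adj g a y}"
  proof
    fix s assume "s \<in> S"
    then obtain d where d: "d \<in> D" "adj g s d" "s \<notin> D" "s \<in> verts g" unfolding S by blast
    have "s \<notin> W"
      using reach_adj_closed[OF wf, of d W b s] d adj_commute[of g s d] unfolding D by blast
    moreover have "s \<noteq> a" using d(1,2) DW adj_commute unfolding W by blast
    ultimately show "s \<in> {y. adj g a y}" using d(4) unfolding W by blast
  qed
  show "is_clique g S"
    unfolding is_clique_def
  proof (intro conjI ballI impI)
    show "S \<subseteq> verts g" unfolding S by blast
    fix s t assume s: "s \<in> S" and t: "t \<in> S" and st: "s \<noteq> t"
    obtain ds where ds: "ds \<in> D" "adj g s ds" using s unfolding S by blast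
    obtain dt where dt: "dt \<in> D" "adj g t dt" using t unfolding S by blast
    have "ds \<in> reach g W dt"
      using reach_trans[OF wf reach_sym[of dt g W b]] ds(1) dt(1) unfolding D by blast
    then obtain l where l: "is_path g l" "hd l = dt" "last l = ds" "set l \<subseteq> W"
      unfolding reach_def by blast
    have lD: "set l \<subseteq> D"
      using set_path_subset_reach[OF wf l(1,4)] l(2) dt(1) unfolding D by blast
    have "l \<noteq> []" using l unfolding is_path_def by simp
    have st_D: "s \<notin> D" "t \<notin> D" "s \<in> verts g" "t \<in> verts g" using s t unfolding S by auto
    have sa: "adj g s a" "adj g a t" using s t SN adj_commute[of g a s] by blast+
    have a: "a \<in> verts g" "a \<notin> D" "a \<noteq> s" "a \<noteq> t"
      using adj_in_verts[OF wf sa(1)] adj_in_verts[OF wf sa(2)] DW unfolding W by auto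
    have P: "is_path g [s, a, t]"
      using sa st a st_D unfolding is_path_consec by auto
    have Q: "is_path g (t # l @ [s])"
      unfolding is_path_consec
    proof (intro conjI allI impI)
      show "distinct (t # l @ [s])" using l(1) lD st_D st unfolding is_path_def by auto
      show "set (t # l @ [s]) \<subseteq> verts g" using l(1) st_D unfolding is_path_def by auto
      fix u v assume "consec (t # l @ [s]) u v"
      then have "(u = t \<and> v = hd l) \<or> consec l u v \<or> (u = last l \<and> v = s)"
        using \<open>l \<noteq> []\<close> by (auto simp: consec_Cons consec_append)
      then show "adj g u v" using l dt ds adj_commute[of g s ds] unfolding is_path_consec by blast
    qed simp
    show "adj g s t"
    proof (rule chordal_adj_of_two_paths[OF ch P Q])
      show "3 \<le> length (t # l @ [s])" using \<open>l \<noteq> []\<close> by (cases l) auto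
      show "set [s, a, t] \<inter> set (t # l @ [s]) = {s, t}" using lD a by auto
      have "\<not> adj g a v" if "v \<in> D" for v
        using that DW unfolding W by blast
      then show "\<forall>u\<in>set [s, a, t] - {s, t}. \<forall>v\<in>set (t # l @ [s]) - {s, t}. \<not> adj g u v"
        using lD by auto
    qed simp_all
  qed
qed

text \<open>Induction on each side of the clique separator \<open>S\<close> of
  \<open>separator_is_clique\<close>, together with \<open>S\<close>, gives a simplicial vertex of \<open>g\<close> inside that side: a
  simplicial pair cannot lie in the clique \<open>S\<close>, and a side has no neighbours outside itself and \<open>S\<close>.\<close>

lemma chordal_complete_or_simplicial_pair:
  "wf_graph g \<Longrightarrow> chordal g \<Longrightarrow> is_clique g (verts g) \<or> has_simplicial_pair g"
proof (induction "card (verts g)" arbitrary: g rule: less_induct)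
  case less
  note wf = less.prems(1) and ch = less.prems(2)
  show ?case
  proof (cases "is_clique g (verts g)")
    case False
    then obtain a b where ab: "a \<in> verts g" "b \<in> verts g" "a \<noteq> b" "\<not> adj g a b"
      unfolding is_clique_def by blast
    define W where "W = verts g - insert a {y. adj g a y}"
    define D where "D = reach g W b"
    define S where "S = {s \<in> verts g - D. \<exists>d\<in>D. adj g s d}"
    define C where "C = reach g (verts g - S) a"
    note sep = separator_is_clique[OF ch wf W_def D_def S_def]
    have "b \<in> W" using ab adj_commute[of g a b] unfolding W_def by auto
    then have bD: "b \<in> D" unfolding D_def using ab(2) by (rule reach_self)
    have DW: "D \<subseteq> W" using reach_subset unfolding D_def by (rule le_infE)
    then have aD: "a \<notin> D" unfolding W_def by blast
    have aS: "a \<notin> S" using sep(1) adj_in_verts[OF wf, of a a] by blast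
    have aC: "a \<in> C" unfolding C_def using aS ab(1) by (intro reach_self) auto
    have CV: "C \<subseteq> verts g - S" using reach_subset unfolding C_def by (rule le_infE)
    have SV: "S \<subseteq> verts g" unfolding S_def by blast
    have DV: "D \<subseteq> verts g" using DW unfolding W_def by blast
    have DS: "D \<inter> S = {}" unfolding S_def by blast
    have D_closed: "w \<in> D \<union> S" if "d \<in> D" "adj g d w" for d w
      using that adj_in_verts[OF wf that(2)] adj_commute[of g d w] unfolding S_def by blast
    have C_closed: "w \<in> C \<union> S" if "c \<in> C" "adj g c w" for c w
    proof (cases "w \<in> S")
      case False
      then have "w \<in> verts g - S" using adj_in_verts[OF wf that(2)] by blast
      then show ?thesis using reach_adj_closed[OF wf that(1)[unfolded C_def] _ that(2)]
        unfolding C_def by blast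
    qed simp
    have CD: "C \<inter> D = {}"
    proof -
      have "reach g (verts g - S) v \<subseteq> D" if "v \<in> D" for v
        using that by (rule reach_subset_closed) (use D_closed in blast)
      then have "a \<notin> reach g (verts g - S) v" if "v \<in> D" for v using that aD by blast
      then show ?thesis using reach_sym[of _ g "verts g - S" a] unfolding C_def by blast
    qed
    have fin: "finite (verts g)" using wf unfolding wf_graph_def by simp
    have sub_C: "C \<union> S \<subseteq> verts g" and sub_D: "D \<union> S \<subseteq> verts g"
      using CV SV DV by blast+
    have "b \<notin> C \<union> S" using bD CD DS by blast
    then have "C \<union> S \<subset> verts g" using sub_C ab(2) by blast
    then have "card (verts (induced g (C \<union> S))) < card (verts g)"
      unfolding verts_induced by (rule psubset_card_mono[OF fin])
    from less.hyps[OF this wf_graph_induced[OF wf sub_C] chordal_induced[OF ch sub_C]]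
    have IH_C: "is_clique (induced g (C \<union> S)) (C \<union> S) \<or> has_simplicial_pair (induced g (C \<union> S))"
      by simp
    have "a \<notin> D \<union> S" using aD aS by blast
    then have "D \<union> S \<subset> verts g" using sub_D ab(1) by blast
    then have "card (verts (induced g (D \<union> S))) < card (verts g)"
      unfolding verts_induced by (rule psubset_card_mono[OF fin])
    from less.hyps[OF this wf_graph_induced[OF wf sub_D] chordal_induced[OF ch sub_D]]
    have IH_D: "is_clique (induced g (D \<union> S)) (D \<union> S) \<or> has_simplicial_pair (induced g (D \<union> S))"
      by simp
    have "C \<inter> S = {}" using CV by blast
    then obtain c where c: "c \<in> C" "simplicial g c"
      by (rule simplicial_in_closed_part[OF _ aC sep(2) C_closed IH_C])
    obtain c' where c': "c' \<in> D" "simplicial g c'"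
      by (rule simplicial_in_closed_part[OF DS bD sep(2) D_closed IH_D])
    have "c' \<notin> C \<union> S" using c'(1) CD DS by blast
    then have "c \<noteq> c'" "\<not> adj g c c'" using c(1) C_closed by auto
    then have "has_simplicial_pair g"
      unfolding has_simplicial_pair_def using c c' CV DV by blast
    then show ?thesis ..
  qed simp
qed

lemma chordal_has_simplicial_vertex:
  assumes wf: "wf_graph g" and "chordal g" "verts g \<noteq> {}"
  obtains x where "x \<in> verts g" "simplicial g x"
proof -
  have clique_simplicial: "simplicial g x" if "is_clique g (verts g)" for x
    using that adj_in_verts[OF wf] unfolding is_clique_def simplicial_def by blast
  from chordal_complete_or_simplicial_pair[OF assms(1,2)] show thesis
  proof
    assume "is_clique g (verts g)"
    then show thesis using that clique_simplicial assms(3) by blast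
  qed (use that in \<open>auto simp: has_simplicial_pair_def\<close>)
qed

subsection \<open>Trees\<close>

definition is_leaf :: "'a graph \<Rightarrow> 'a \<Rightarrow> 'a \<Rightarrow> bool" where
  "is_leaf t l p \<longleftrightarrow> l \<in> verts t \<and> adj t l p \<and> (\<forall>q. adj t l q \<longrightarrow> q = p)"

lemma cycle_of_path_back_edge:
  assumes ps: "is_path g (A @ q # B @ [p, l])" and lq: "adj g l q"
  shows "is_cycle g (q # B @ [p, l])"
  unfolding is_cycle_consec
proof (intro conjI allI impI)
  let ?cs = "q # B @ [p, l]"
  show "3 \<le> length ?cs" by simp
  show "distinct ?cs" "set ?cs \<subseteq> verts g" using ps unfolding is_path_def by auto
  fix x y assume "consec (?cs @ [hd ?cs]) x y"
  then have "consec ?cs x y \<or> (x = l \<and> y = q)"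
    using consec_append[of ?cs "[q]"] by simp
  moreover have "consec ?cs x y \<Longrightarrow> consec (A @ ?cs) x y"
    by (simp add: consec_append)
  ultimately show "adj g x y" using ps lq unfolding is_path_consec by auto
qed

text \<open>The last vertex of a longest path is a leaf: any other neighbour would extend the path or close
  a cycle.\<close>

lemma tree_has_leaf:
  assumes t: "is_tree t" and two: "2 \<le> card (verts t)"
  obtains l p where "is_leaf t l p"
proof -
  have wf: "wf_graph t" and fin: "finite (verts t)" using t unfolding is_tree_def wf_graph_def by auto
  have "\<not> card (verts t) \<le> Suc 0" using two by simp
  then obtain u w where uw: "u \<in> verts t" "w \<in> verts t" "u \<noteq> w"
    unfolding card_le_Suc0_iff_eq[OF fin] by blast
  define P where "P ps \<longleftrightarrow> is_path t ps \<and> hd ps \<noteq> last ps" for ps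
  obtain ps0 where "is_path t ps0" "hd ps0 = u" "last ps0 = w"
    using t uw unfolding is_tree_def connected_graph_def by blast
  then have P0: "P ps0" using uw(3) unfolding P_def by simp
  have bound: "\<forall>ps. P ps \<longrightarrow> length ps < card (verts t) + 1"
  proof (intro allI impI)
    fix ps assume "P ps"
    then have "distinct ps" "set ps \<subseteq> verts t" unfolding P_def is_path_def by auto
    then have "length ps \<le> card (verts t)" using card_mono[OF fin] distinct_card[of ps] by metis
    then show "length ps < card (verts t) + 1" by simp
  qed
  obtain ps where ps: "P ps" and longest: "\<forall>ps'. P ps' \<longrightarrow> length ps' \<le> length ps"
    using ex_has_greatest_nat[OF P0 bound] by blast
  have path: "is_path t ps" and ends: "hd ps \<noteq> last ps" using ps unfolding P_def by auto
  then obtain ps' l where ps': "ps = ps' @ [l]"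
    unfolding is_path_def by (cases ps rule: rev_cases) auto
  with ends have "ps' \<noteq> []" by auto
  then obtain qs p where pql: "ps = qs @ [p, l]"
    using ps' by (cases ps' rule: rev_cases) auto
  then have "adj t p l" using path unfolding is_path_consec by (simp add: consec_append)
  then have lp: "adj t l p" by (simp add: adj_commute)
  have "q = p" if lq: "adj t l q" for q
  proof (rule ccontr)
    assume qp: "q \<noteq> p"
    have q: "q \<in> verts t" "q \<noteq> l" using adj_in_verts[OF wf lq] by auto
    show False
    proof (cases "q \<in> set ps")
      case False
      have "is_path t (ps @ [q])" using is_path_snoc[OF path False q(1)] lq pql by simp
      moreover have "hd (ps @ [q]) \<noteq> q" using False path hd_in_set unfolding is_path_def by auto
      ultimately have "P (ps @ [q])" unfolding P_def by simp
      then have "length (ps @ [q]) \<le> length ps" using longest by blast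
      then show False by simp
    next
      case True
      then have "q \<in> set qs" using pql q qp by simp
      then obtain A B where "qs = A @ q # B" by (meson split_list)
      then have "is_cycle t (q # B @ [p, l])"
        using cycle_of_path_back_edge[of t A q B p l] path lq pql by simp
      then show False using t unfolding is_tree_def by blast
    qed
  qed
  then have "is_leaf t l p" using lp adj_in_verts[OF wf lp] unfolding is_leaf_def by blast
  then show thesis by (rule that)
qed

lemma leaf_not_interior:
  assumes ps: "is_path t ps" "l \<in> set ps" and leaf: "is_leaf t l p"
  shows "l = hd ps \<or> l = last ps"
proof (rule ccontr)
  assume ends: "\<not> (l = hd ps \<or> l = last ps)"
  obtain A B where AB: "ps = A @ l # B" using split_list[OF ps(2)] by blast
  have ne: "A \<noteq> []" "B \<noteq> []" using ends AB by auto
  then have "consec ps (last A) l" "consec ps l (hd B)"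
    using AB by (simp_all add: consec_append consec_Cons)
  then have "adj t (last A) l" "adj t l (hd B)"
    using ps(1) unfolding is_path_consec by blast+
  then have "last A = p" "hd B = p"
    using leaf adj_commute[of t "last A" l] unfolding is_leaf_def by auto
  moreover have "last A \<in> set A" "hd B \<in> set B" using ne by simp_all
  moreover have "set A \<inter> set B = {}" using ps(1) AB unfolding is_path_def by simp
  ultimately show False by (metis disjoint_iff)
qed

lemma path_from_leaf:
  assumes "is_path t ps" "hd ps = l" "last ps \<noteq> l" "is_leaf t l p"
  shows "p \<in> set ps"
proof -
  obtain rest where r: "ps = l # rest"
    using assms(1,2) unfolding is_path_def by (cases ps) auto
  with assms(3) have "rest \<noteq> []" by auto
  then have "adj t l (hd rest)"
    using assms(1) r unfolding is_path_consec by (simp add: consec_Cons)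
  then have "hd rest = p" using assms(4) unfolding is_leaf_def by blast
  then show ?thesis using r \<open>rest \<noteq> []\<close> by auto
qed

lemma is_tree_delete_leaf:
  assumes t: "is_tree t" and two: "2 \<le> card (verts t)" and leaf: "is_leaf t l p"
  shows "is_tree (induced t (verts t - {l}))"
  unfolding is_tree_def
proof (intro conjI)
  have wf: "wf_graph t" using t unfolding is_tree_def by simp
  show "wf_graph (induced t (verts t - {l}))" by (rule wf_graph_induced[OF wf]) auto
  have "card (verts t) - card {l} \<le> card (verts t - {l})"
    by (rule diff_card_le_card_Diff) simp
  then have "card (verts t - {l}) \<noteq> 0" using two by simp
  then show "verts (induced t (verts t - {l})) \<noteq> {}" by (metis card.empty verts_induced)
  show "\<nexists>cs. is_cycle (induced t (verts t - {l})) cs"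
    using t is_cycle_induced[of "verts t - {l}" t] unfolding is_tree_def by blast
  show "connected_graph (induced t (verts t - {l}))"
    unfolding connected_graph_def verts_induced
  proof (intro ballI)
    fix u w assume uw: "u \<in> verts t - {l}" "w \<in> verts t - {l}"
    then obtain ps where ps: "is_path t ps" "hd ps = u" "last ps = w"
      using t unfolding is_tree_def connected_graph_def by blast
    have "l \<notin> set ps" using leaf_not_interior[OF ps(1) _ leaf] ps uw by blast
    then have "is_path (induced t (verts t - {l})) ps"
      using ps(1) is_path_induced_iff[of "verts t - {l}" t ps] unfolding is_path_def by auto
    then show "\<exists>ps. is_path (induced t (verts t - {l})) ps \<and> hd ps = u \<and> last ps = w"
      using ps by blast
  qed
qed

subsection \<open>Tree decompositions\<close>

definition path_consistent :: "'b graph \<Rightarrow> ('b \<Rightarrow> 'a set) \<Rightarrow> bool" where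
  "path_consistent t \<beta> \<longleftrightarrow>
     (\<forall>u\<in>verts t. \<forall>v\<in>verts t. \<forall>w\<in>verts t. on_path t u v w \<longrightarrow> \<beta> u \<inter> \<beta> w \<subseteq> \<beta> v)"

lemma tree_decomp_iff:
  "tree_decomp g (t, \<beta>) \<longleftrightarrow> is_tree t \<and> (\<forall>v\<in>verts t. \<beta> v \<subseteq> verts g) \<and>
     (\<forall>x\<in>verts g. \<exists>v\<in>verts t. x \<in> \<beta> v) \<and> (\<forall>e\<in>edges g. \<exists>v\<in>verts t. e \<subseteq> \<beta> v) \<and>
     path_consistent t \<beta>"
  by (simp add: tree_decomp_def path_consistent_def)

lemma on_path_in_verts: "on_path t a v b \<Longrightarrow> a \<in> verts t \<and> v \<in> verts t \<and> b \<in> verts t"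
  unfolding on_path_def is_path_def by (auto dest: hd_in_set last_in_set)

lemma path_consistentD:
  assumes "path_consistent t \<beta>" "on_path t u v w"
  shows "\<beta> u \<inter> \<beta> w \<subseteq> \<beta> v"
  using assms on_path_in_verts[OF assms(2)] unfolding path_consistent_def by meson

lemma on_path_induced: "W \<subseteq> verts g \<Longrightarrow> on_path (induced g W) a v b \<Longrightarrow> on_path g a v b"
  unfolding on_path_def using is_path_induced_iff by blast

lemma path_consistent_induced:
  assumes "W \<subseteq> verts t" "path_consistent t \<beta>"
  shows "path_consistent (induced t W) \<beta>"
  unfolding path_consistent_def
proof (intro ballI impI)
  fix u v w assume "on_path (induced t W) u v w"
  then show "\<beta> u \<inter> \<beta> w \<subseteq> \<beta> v" by (rule path_consistentD[OF assms(2) on_path_induced[OF assms(1)]])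
qed

text \<open>If a leaf \<open>l\<close> does not hold all of \<open>K\<close>, every element of \<open>K\<close> in
  \<open>\<beta> l\<close> reappears at the neighbour of \<open>l\<close>, so \<open>l\<close> can be deleted.\<close>

lemma tree_helly:
  "is_tree t \<Longrightarrow> path_consistent t \<beta> \<Longrightarrow> (\<forall>x\<in>K. \<forall>y\<in>K. \<exists>v\<in>verts t. x \<in> \<beta> v \<and> y \<in> \<beta> v)
    \<Longrightarrow> \<exists>v\<in>verts t. K \<subseteq> \<beta> v"
proof (induction "card (verts t)" arbitrary: t rule: less_induct)
  case less
  note t = less.prems(1) and pc = less.prems(2) and pairs = less.prems(3)
  have wf: "wf_graph t" and fin: "finite (verts t)" and ne: "verts t \<noteq> {}"
    using t unfolding is_tree_def wf_graph_def by auto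
  show ?case
  proof (cases "2 \<le> card (verts t)")
    case False
    moreover have "card (verts t) \<noteq> 0" using fin ne by simp
    ultimately have "card (verts t) = Suc 0" by arith
    then obtain v where v: "verts t = {v}" unfolding card_Suc_eq by blast
    have "K \<subseteq> \<beta> v"
    proof
      fix x assume "x \<in> K"
      then obtain w where "w \<in> verts t" "x \<in> \<beta> w" using pairs by blast
      then show "x \<in> \<beta> v" using v by simp
    qed
    then show ?thesis using v by simp
  next
    case True
    obtain l p where leaf: "is_leaf t l p" using tree_has_leaf[OF t True] .
    then have l: "l \<in> verts t" and lp: "adj t l p" unfolding is_leaf_def by simp_all
    have p: "p \<in> verts t" "p \<noteq> l" using adj_in_verts[OF wf lp] by auto
    show ?thesis
    proof (cases "K \<subseteq> \<beta> l")
      case False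
      then obtain z where z: "z \<in> K" "z \<notin> \<beta> l" by blast
      have K_at_p: "K \<inter> \<beta> l \<subseteq> \<beta> p"
      proof
        fix x assume x: "x \<in> K \<inter> \<beta> l"
        obtain v where v: "v \<in> verts t" "x \<in> \<beta> v" "z \<in> \<beta> v" using pairs x z by blast
        obtain ps where ps: "is_path t ps" "hd ps = l" "last ps = v"
          using t v(1) l unfolding is_tree_def connected_graph_def by blast
        have "v \<noteq> l" using v(3) z(2) by metis
        then have "p \<in> set ps" using path_from_leaf[OF ps(1,2) _ leaf] ps(3) by simp
        then have "on_path t l p v" unfolding on_path_def using ps by blast
        then show "x \<in> \<beta> p" using path_consistentD[OF pc] x v(2) by blast
      qed
      define t' where "t' = induced t (verts t - {l})"
      have t': "is_tree t'" unfolding t'_def by (rule is_tree_delete_leaf[OF t True leaf])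
      have "card (verts t') < card (verts t)" unfolding t'_def verts_induced by (rule card_Diff1_less[OF fin l])
      moreover have "path_consistent t' \<beta>"
        unfolding t'_def by (rule path_consistent_induced[OF _ pc]) blast
      moreover have "\<forall>x\<in>K. \<forall>y\<in>K. \<exists>v\<in>verts t'. x \<in> \<beta> v \<and> y \<in> \<beta> v"
      proof (intro ballI)
        fix x y assume xy: "x \<in> K" "y \<in> K"
        then obtain v where v: "v \<in> verts t" "x \<in> \<beta> v" "y \<in> \<beta> v" using pairs by blast
        show "\<exists>v\<in>verts t'. x \<in> \<beta> v \<and> y \<in> \<beta> v"
        proof (cases "v = l")
          case True
          then show ?thesis using K_at_p v xy p unfolding t'_def by auto
        qed (use v in \<open>auto simp: t'_def\<close>)
      qed
      ultimately have "\<exists>v\<in>verts t'. K \<subseteq> \<beta> v" by (rule less.hyps[OF _ t'])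
      then show ?thesis unfolding t'_def by auto
    qed (use l in auto)
  qed
qed

lemma clique_in_bag:
  assumes td: "tree_decomp g (t, \<beta>)" and K: "is_clique g K"
  shows "\<exists>v\<in>verts t. K \<subseteq> \<beta> v"
proof -
  have cover: "\<forall>x\<in>verts g. \<exists>v\<in>verts t. x \<in> \<beta> v" and edge: "\<forall>e\<in>edges g. \<exists>v\<in>verts t. e \<subseteq> \<beta> v"
    and t: "is_tree t" and pc: "path_consistent t \<beta>"
    using td unfolding tree_decomp_iff by simp_all
  have "\<exists>v\<in>verts t. x \<in> \<beta> v \<and> y \<in> \<beta> v" if "x \<in> K" "y \<in> K" for x y
  proof (cases "x = y")
    case True
    have "x \<in> verts g" using K that(1) unfolding is_clique_def by blast
    then show ?thesis using cover True by simp
  next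
    case False
    then have "{x, y} \<in> edges g" using K that unfolding is_clique_def adj_def by simp
    then obtain v where "v \<in> verts t" "{x, y} \<subseteq> \<beta> v" using edge by blast
    then show ?thesis by blast
  qed
  then have "\<forall>x\<in>K. \<forall>y\<in>K. \<exists>v\<in>verts t. x \<in> \<beta> v \<and> y \<in> \<beta> v" by blast
  then show ?thesis by (rule tree_helly[OF t pc])
qed

definition add_leaf :: "'b graph \<Rightarrow> 'b \<Rightarrow> 'b \<Rightarrow> 'b graph" where
  "add_leaf t u n = (insert n (verts t), insert {u, n} (edges t))"

lemma verts_add_leaf [simp]: "verts (add_leaf t u n) = insert n (verts t)"
  by (simp add: add_leaf_def verts_def)

lemma edges_add_leaf [simp]: "edges (add_leaf t u n) = insert {u, n} (edges t)"
  by (simp add: add_leaf_def edges_def)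

lemma adj_add_leaf: "adj (add_leaf t u n) a b \<longleftrightarrow> adj t a b \<or> {a, b} = {u, n}"
  by (auto simp: adj_def)

lemma adj_add_leaf_new:
  assumes wf: "wf_graph t" and n: "n \<notin> verts t" and un: "u \<noteq> n" and a: "adj (add_leaf t u n) n y"
  shows "y = u"
proof -
  have "\<not> adj t n y" using adj_in_verts[OF wf] n by blast
  then have "{n, y} = {u, n}" using a unfolding adj_add_leaf by blast
  then show "y = u" using un by (metis doubleton_eq_iff)
qed

lemma is_path_add_leaf: "is_path t ps \<Longrightarrow> is_path (add_leaf t u n) ps"
  unfolding is_path_consec adj_add_leaf by auto

lemma is_path_of_add_leaf:
  assumes ps: "is_path (add_leaf t u n) ps" and n: "n \<notin> set ps"
  shows "is_path t ps"
  unfolding is_path_consec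
proof (intro conjI allI impI)
  show "ps \<noteq> []" "distinct ps" "set ps \<subseteq> verts t" using ps n unfolding is_path_def by auto
  fix a b assume ab: "consec ps a b"
  then have "adj t a b \<or> {a, b} = {u, n}" using ps unfolding is_path_consec adj_add_leaf by blast
  moreover have "a \<noteq> n" "b \<noteq> n" using consec_in_set[OF ab] n by auto
  ultimately show "adj t a b" by auto
qed

lemma cycle_vertex_two_neighbours:
  assumes cyc: "is_cycle g cs" and x: "x \<in> set cs"
  obtains y z where "y \<noteq> z" "adj g x y" "adj g z x"
proof -
  let ?n = "length cs"
  obtain i where i: "i < ?n" "cs ! i = x" using x by (auto simp: in_set_conv_nth)
  have n: "3 \<le> ?n" "distinct cs" and step: "\<And>j. j < ?n \<Longrightarrow> adj g (cs ! j) (cs ! ((j + 1) mod ?n))"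
    using cyc unfolding is_cycle_def by auto
  define k where "k = (if i = 0 then ?n - 1 else i - 1)"
  have k: "k < ?n" "(k + 1) mod ?n = i" unfolding k_def using i(1) n(1) by auto
  have "(i + 1) mod ?n \<noteq> k"
  proof (cases "i + 1 = ?n")
    case True
    then show ?thesis using n(1) unfolding k_def by auto
  qed (use i(1) n(1) in \<open>auto simp: k_def\<close>)
  moreover have "(i + 1) mod ?n < ?n" using i(1) by (intro mod_less_divisor) auto
  ultimately have "cs ! ((i + 1) mod ?n) \<noteq> cs ! k"
    using n(2) k(1) by (simp add: nth_eq_iff_index_eq)
  moreover have "adj g x (cs ! ((i + 1) mod ?n))" using step[OF i(1)] i(2) by simp
  moreover have "adj g (cs ! k) x" using step[OF k(1)] k(2) i(2) by simp
  ultimately show thesis by (rule that)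
qed

lemma acyclic_add_leaf:
  assumes wf: "wf_graph t" and acyclic: "\<nexists>cs. is_cycle t cs" and n: "n \<notin> verts t" and un: "u \<noteq> n"
  shows "\<nexists>cs. is_cycle (add_leaf t u n) cs"
proof
  assume "\<exists>cs. is_cycle (add_leaf t u n) cs"
  then obtain cs where cs: "is_cycle (add_leaf t u n) cs" by blast
  show False
  proof (cases "n \<in> set cs")
    case True
    then obtain y z where "y \<noteq> z" "adj (add_leaf t u n) n y" "adj (add_leaf t u n) z n"
      by (rule cycle_vertex_two_neighbours[OF cs])
    then show False using adj_add_leaf_new[OF wf n un] adj_commute by metis
  next
    case False
    have "is_cycle t cs" unfolding is_cycle_consec
    proof (intro conjI allI impI)
      show "3 \<le> length cs" "distinct cs" "set cs \<subseteq> verts t"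
        using cs False unfolding is_cycle_def by auto
      fix a b assume ab: "consec (cs @ [hd cs]) a b"
      then have "adj t a b \<or> {a, b} = {u, n}"
        using cs unfolding is_cycle_consec adj_add_leaf by blast
      moreover have "set (cs @ [hd cs]) = set cs" using cs unfolding is_cycle_def by (cases cs) auto
      then have "a \<noteq> n" "b \<noteq> n" using consec_in_set[OF ab] False by auto
      ultimately show "adj t a b" by auto
    qed
    then show False using acyclic by blast
  qed
qed

lemma connected_add_leaf:
  assumes conn: "connected_graph t" and u: "u \<in> verts t" and n: "n \<notin> verts t"
  shows "connected_graph (add_leaf t u n)"
  unfolding connected_graph_def
proof (intro ballI)
  have paths: "\<exists>ps. is_path t ps \<and> hd ps = a \<and> last ps = b" if "a \<in> verts t" "b \<in> verts t" for a b
    using conn that unfolding connected_graph_def by blast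
  have from_n: "\<exists>ps. is_path (add_leaf t u n) ps \<and> hd ps = n \<and> last ps = w" if w: "w \<in> verts t" for w
  proof -
    obtain ps where ps: "is_path t ps" "hd ps = u" "last ps = w" using paths[OF u w] by blast
    have "n \<notin> set ps" using ps n unfolding is_path_def by auto
    moreover have "adj (add_leaf t u n) n u" by (simp add: adj_add_leaf insert_commute)
    ultimately have "is_path (add_leaf t u n) (n # ps)"
      using is_path_Cons[OF is_path_add_leaf[OF ps(1)]] ps(2) by simp
    then show ?thesis using ps(1,3) unfolding is_path_def by (intro exI[of _ "n # ps"]) simp
  qed
  fix a b assume a: "a \<in> verts (add_leaf t u n)" and b: "b \<in> verts (add_leaf t u n)"
  show "\<exists>ps. is_path (add_leaf t u n) ps \<and> hd ps = a \<and> last ps = b"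
  proof (cases "a = n"; cases "b = n")
    assume "a = n" "b = n"
    moreover have "is_path (add_leaf t u n) [n]" unfolding is_path_def by simp
    ultimately show ?thesis by (intro exI[of _ "[n]"]) simp
  next
    assume "a = n" "b \<noteq> n"
    then have "b \<in> verts t" using b by simp
    then show ?thesis using from_n \<open>a = n\<close> by simp
  next
    assume "a \<noteq> n" "b = n"
    then have "a \<in> verts t" using a by simp
    then obtain ps where ps: "is_path (add_leaf t u n) ps" "hd ps = n" "last ps = a"
      using from_n by blast
    then have "ps \<noteq> []" unfolding is_path_def by simp
    then show ?thesis using is_path_rev[OF ps(1)] ps \<open>b = n\<close>
      by (intro exI[of _ "rev ps"]) (simp add: hd_rev last_rev)
  next
    assume "a \<noteq> n" "b \<noteq> n"
    then have "a \<in> verts t" "b \<in> verts t" using a b by simp_all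
    then obtain ps where "is_path t ps" "hd ps = a" "last ps = b" using paths by blast
    then show ?thesis by (intro exI[of _ ps]) (simp add: is_path_add_leaf)
  qed
qed

lemma is_tree_add_leaf:
  assumes t: "is_tree t" and u: "u \<in> verts t" and n: "n \<notin> verts t"
  shows "is_tree (add_leaf t u n)"
proof -
  have wf: "wf_graph t" using t unfolding is_tree_def by simp
  have un: "u \<noteq> n" using u n by blast
  then have "card {u, n} = 2" by simp
  then have "wf_graph (add_leaf t u n)" using wf u unfolding wf_graph_def by auto
  then show ?thesis
    using acyclic_add_leaf[OF wf _ n un] connected_add_leaf[OF _ u n] t unfolding is_tree_def by simp
qed

lemma on_path_sym: "on_path t a v b \<Longrightarrow> on_path t b v a"
  unfolding on_path_def
proof (elim exE conjE)
  fix ps assume ps: "is_path t ps" "hd ps = a" "last ps = b" "v \<in> set ps"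
  then have "ps \<noteq> []" unfolding is_path_def by simp
  then show "\<exists>ps. is_path t ps \<and> hd ps = b \<and> last ps = a \<and> v \<in> set ps"
    using is_path_rev[OF ps(1)] ps by (intro exI[of _ "rev ps"]) (simp add: hd_rev last_rev)
qed

lemma on_path_add_leaf_from_new:
  assumes wf: "wf_graph t" and n: "n \<notin> verts t" and un: "u \<noteq> n"
    and ps: "is_path (add_leaf t u n) ps" "hd ps = n" "last ps = b" "v \<in> set ps" and b: "b \<noteq> n"
  shows "v = n \<or> on_path t u v b"
proof -
  obtain rest where r: "ps = n # rest" using ps(1,2) unfolding is_path_def by (cases ps) auto
  with ps(3) b have "rest \<noteq> []" by auto
  have "n \<notin> set rest" using ps(1) r unfolding is_path_def by simp
  have "adj (add_leaf t u n) n (hd rest)"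
    using ps(1) r \<open>rest \<noteq> []\<close> unfolding is_path_consec by (simp add: consec_Cons)
  then have "hd rest = u" by (rule adj_add_leaf_new[OF wf n un])
  moreover have "is_path (add_leaf t u n) rest"
    using ps(1) r \<open>rest \<noteq> []\<close> unfolding is_path_consec by (simp add: consec_Cons)
  then have "is_path t rest" using \<open>n \<notin> set rest\<close> by (rule is_path_of_add_leaf)
  moreover have "last rest = b" using r \<open>rest \<noteq> []\<close> ps(3) by simp
  moreover have "v = n \<or> v \<in> set rest" using ps(4) r by simp
  ultimately show ?thesis unfolding on_path_def by blast
qed

lemma on_path_add_leaf:
  assumes wf: "wf_graph t" and n: "n \<notin> verts t" and un: "u \<noteq> n"
    and o: "on_path (add_leaf t u n) a v b"
  shows "on_path t a v b \<or> (a = n \<and> (v = n \<or> on_path t u v b)) \<or> (b = n \<and> (v = n \<or> on_path t a v u))"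
proof -
  obtain ps where ps: "is_path (add_leaf t u n) ps" "hd ps = a" "last ps = b" "v \<in> set ps"
    using o unfolding on_path_def by blast
  show ?thesis
  proof (cases "n \<in> set ps")
    case False
    then have "on_path t a v b"
      using is_path_of_add_leaf[OF ps(1) False] ps(2-4) unfolding on_path_def by blast
    then show ?thesis ..
  next
    case True
    have "\<forall>q. adj (add_leaf t u n) n q \<longrightarrow> q = u" using adj_add_leaf_new[OF wf n un] by blast
    then have "is_leaf (add_leaf t u n) n u"
      unfolding is_leaf_def by (simp add: adj_add_leaf insert_commute)
    then have ends: "n = a \<or> n = b" using leaf_not_interior[OF ps(1) True] ps(2,3) by simp
    have "ps \<noteq> []" using ps(1) unfolding is_path_def by simp
    show ?thesis
    proof (cases "a = n"; cases "b = n")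
      assume "a = n" "b = n"
      then obtain x xs where "ps = x # xs" using \<open>ps \<noteq> []\<close> by (cases ps) auto
      moreover have "xs = []"
      proof (rule ccontr)
        assume "xs \<noteq> []"
        then have "last xs \<in> set xs" by simp
        moreover have "last xs = x" using ps(2,3) \<open>a = n\<close> \<open>b = n\<close> \<open>ps = x # xs\<close> \<open>xs \<noteq> []\<close> by simp
        ultimately have "x \<in> set xs" by simp
        then show False using ps(1) \<open>ps = x # xs\<close> unfolding is_path_def by simp
      qed
      ultimately show ?thesis using ps(2,4) \<open>a = n\<close> by simp
    next
      assume "a = n" "b \<noteq> n"
      then show ?thesis using on_path_add_leaf_from_new[OF wf n un ps(1) _ ps(3,4)] ps(2) by simp
    next
      assume "a \<noteq> n" "b = n"
      then have "v = n \<or> on_path t u v a"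
        using on_path_add_leaf_from_new[OF wf n un is_path_rev[OF ps(1)]] ps \<open>ps \<noteq> []\<close>
        by (simp add: hd_rev last_rev)
      then show ?thesis using on_path_sym[of t u v a] \<open>b = n\<close> by blast
    next
      assume "a \<noteq> n" "b \<noteq> n"
      then show ?thesis using ends by simp
    qed
  qed
qed

subsection \<open>Clique trees of chordal graphs\<close>

lemma simplicial_closed_neighbourhood_MaxClq:
  assumes wf: "wf_graph g" and x: "x \<in> verts g" "simplicial g x"
  shows "insert x {y. adj g x y} \<in> MaxClq g"
proof -
  let ?N = "{y. adj g x y}"
  have "is_clique g (insert x ?N)"
    unfolding is_clique_def
  proof (intro conjI ballI impI)
    show "insert x ?N \<subseteq> verts g" using x(1) adj_in_verts[OF wf] by blast
    fix u v assume uv: "u \<in> insert x ?N" "v \<in> insert x ?N" "u \<noteq> v"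
    show "adj g u v"
    proof (cases "u = x \<or> v = x")
      case True
      then show ?thesis using uv adj_commute[of g x u] by auto
    next
      case False
      then have "adj g x u" "adj g x v" using uv by auto
      then show ?thesis using x(2) uv(3) unfolding simplicial_def by blast
    qed
  qed
  moreover have "\<not> insert x ?N \<subset> C" if "is_clique g C" for C
  proof
    assume sub: "insert x ?N \<subset> C"
    then obtain z where z: "z \<in> C" "z \<notin> insert x ?N" by blast
    have "x \<in> C" using sub by blast
    moreover have "x \<noteq> z" using z(2) by auto
    ultimately have "adj g x z" using that z(1) unfolding is_clique_def by blast
    then show False using z(2) by simp
  qed
  ultimately show ?thesis unfolding MaxClq_def by simp
qed

lemma simplicial_neighbourhood_clique:
  assumes wf: "wf_graph g" and x: "simplicial g x"
  shows "is_clique (induced g (verts g - {x})) {y. adj g x y}"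
proof -
  have "is_clique g {y. adj g x y}"
    unfolding is_clique_def
  proof (intro conjI ballI impI)
    show "{y. adj g x y} \<subseteq> verts g" using adj_in_verts[OF wf] by blast
    fix u v assume "u \<in> {y. adj g x y}" "v \<in> {y. adj g x y}" "u \<noteq> v"
    then show "adj g u v" using x unfolding simplicial_def by simp
  qed
  moreover have "x \<notin> {y. adj g x y}" using adj_in_verts[OF wf, of x x] by blast
  ultimately show ?thesis unfolding is_clique_induced_delete by simp
qed

lemma MaxClq_of_delete_simplicial:
  assumes wf: "wf_graph g" and x: "simplicial g x"
    and K: "K \<in> MaxClq (induced g (verts g - {x}))" and KN: "K \<noteq> {y. adj g x y}"
  shows "K \<in> MaxClq g"
proof -
  let ?N = "{y. adj g x y}" and ?g' = "induced g (verts g - {x})"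
  have "is_clique ?g' K" and K_max: "\<And>C'. is_clique ?g' C' \<Longrightarrow> \<not> K \<subset> C'"
    using K unfolding MaxClq_def by auto
  then have K_clique: "is_clique g K" "x \<notin> K" unfolding is_clique_induced_delete by simp_all
  have N_clique: "is_clique ?g' ?N" by (rule simplicial_neighbourhood_clique[OF wf x])
  have "\<not> K \<subset> C'" if C': "is_clique g C'" for C'
  proof
    assume KC: "K \<subset> C'"
    show False
    proof (cases "x \<in> C'")
      case False
      then have "is_clique ?g' C'" using C' unfolding is_clique_induced_delete by simp
      then show False using K_max KC by blast
    next
      case True
      have "K \<subseteq> ?N"
      proof
        fix k assume k: "k \<in> K"
        then have "x \<noteq> k" "k \<in> C'" using K_clique(2) KC by auto
        then show "k \<in> ?N" using C' True unfolding is_clique_def by simp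
      qed
      then have "K \<subset> ?N" using KN by blast
      then show False using K_max N_clique by blast
    qed
  qed
  then show ?thesis using K_clique(1) unfolding MaxClq_def by simp
qed

lemma edge_cases_delete_vertex:
  assumes wf: "wf_graph g" and e: "e \<in> edges g"
  shows "e \<subseteq> insert x {y. adj g x y} \<or> e \<in> edges (induced g (verts g - {x}))"
proof (cases "x \<in> e")
  case True
  obtain a b where ab: "e = {a, b}" "a \<noteq> b"
    using wf e unfolding wf_graph_def by (metis card_2_iff)
  then have "adj g a b" using e unfolding adj_def by simp
  moreover have "x = a \<or> x = b" using True ab by auto
  ultimately have "e \<subseteq> insert x {y. adj g x y}" using ab adj_commute[of g a b] by auto
  then show ?thesis ..
next
  case False
  then show ?thesis using wf e unfolding wf_graph_def by auto
qed

lemma tree_decomp_add_leaf: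
  assumes wf: "wf_graph g" and x: "x \<in> verts g"
    and td: "tree_decomp (induced g (verts g - {x})) (t, \<beta>)"
    and u: "u \<in> verts t" "{y. adj g x y} \<subseteq> \<beta> u" and n: "n \<notin> verts t"
  shows "tree_decomp g (add_leaf t u n, \<beta>(n := insert x {y. adj g x y}))"
proof -
  let ?N = "{y. adj g x y}" and ?\<beta> = "\<beta>(n := insert x {y. adj g x y})"
  have t: "is_tree t" and bags: "\<forall>v\<in>verts t. \<beta> v \<subseteq> verts g - {x}"
    and cover: "\<forall>y\<in>verts g - {x}. \<exists>v\<in>verts t. y \<in> \<beta> v"
    and edge: "\<forall>e\<in>edges (induced g (verts g - {x})). \<exists>v\<in>verts t. e \<subseteq> \<beta> v"
    and pc: "path_consistent t \<beta>"
    using td unfolding tree_decomp_iff verts_induced by simp_all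
  have wft: "wf_graph t" using t unfolding is_tree_def by simp
  have un: "u \<noteq> n" using u n by blast
  have old: "?\<beta> v = \<beta> v" if "v \<in> verts t" for v using that n by auto
  show ?thesis
    unfolding tree_decomp_iff
  proof (intro conjI ballI)
    show "is_tree (add_leaf t u n)" by (rule is_tree_add_leaf[OF t u(1) n])
  next
    fix v assume "v \<in> verts (add_leaf t u n)"
    then show "?\<beta> v \<subseteq> verts g" using bags x adj_in_verts[OF wf] by auto
  next
    fix y assume "y \<in> verts g"
    then show "\<exists>v\<in>verts (add_leaf t u n). y \<in> ?\<beta> v" using cover old by (cases "y = x") auto
  next
    fix e assume "e \<in> edges g"
    then show "\<exists>v\<in>verts (add_leaf t u n). e \<subseteq> ?\<beta> v"
      using edge_cases_delete_vertex[OF wf, of e x] edge old by auto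
  next
    show "path_consistent (add_leaf t u n) ?\<beta>"
      unfolding path_consistent_def
    proof (intro ballI impI)
      fix a v b assume "on_path (add_leaf t u n) a v b"
      from on_path_add_leaf[OF wft n un this]
      consider (inside) "on_path t a v b" | (at_new) "v = n" "a = n \<or> b = n"
        | (from_new) "a = n" "on_path t u v b" | (to_new) "b = n" "on_path t a v u"
        by blast
      then show "?\<beta> a \<inter> ?\<beta> b \<subseteq> ?\<beta> v"
      proof cases
        case inside
        then show ?thesis using path_consistentD[OF pc inside] on_path_in_verts[OF inside] old by simp
      next
        case at_new
        then show ?thesis by auto
      next
        case from_new
        have vb: "v \<in> verts t" "b \<in> verts t" using on_path_in_verts[OF from_new(2)] by simp_all
        have "insert x ?N \<inter> \<beta> b \<subseteq> \<beta> u \<inter> \<beta> b" using bags vb(2) u(2) by blast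
        also have "\<dots> \<subseteq> \<beta> v" by (rule path_consistentD[OF pc from_new(2)])
        finally show ?thesis using from_new(1) old vb by simp
      next
        case to_new
        have va: "v \<in> verts t" "a \<in> verts t" using on_path_in_verts[OF to_new(2)] by simp_all
        have "\<beta> a \<inter> insert x ?N \<subseteq> \<beta> a \<inter> \<beta> u" using bags va(2) u(2) by blast
        also have "\<dots> \<subseteq> \<beta> v" by (rule path_consistentD[OF pc to_new(2)])
        finally show ?thesis using to_new(1) old va by simp
      qed
    qed
  qed
qed

lemma tree_decomp_extend_bag:
  assumes wf: "wf_graph g" and x: "x \<in> verts g"
    and td: "tree_decomp (induced g (verts g - {x})) (t, \<beta>)"
    and u: "u \<in> verts t" "\<beta> u = {y. adj g x y}"
    and maximal: "\<And>v. v \<in> verts t \<Longrightarrow> \<beta> u \<subseteq> \<beta> v \<Longrightarrow> \<beta> v = \<beta> u"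
  shows "tree_decomp g (t, \<lambda>v. if \<beta> v = \<beta> u then insert x (\<beta> u) else \<beta> v)"
proof -
  let ?\<beta> = "\<lambda>v. if \<beta> v = \<beta> u then insert x (\<beta> u) else \<beta> v"
  have t: "is_tree t" and bags: "\<forall>v\<in>verts t. \<beta> v \<subseteq> verts g - {x}"
    and cover: "\<forall>y\<in>verts g - {x}. \<exists>v\<in>verts t. y \<in> \<beta> v"
    and edge: "\<forall>e\<in>edges (induced g (verts g - {x})). \<exists>v\<in>verts t. e \<subseteq> \<beta> v"
    and pc: "path_consistent t \<beta>"
    using td unfolding tree_decomp_iff verts_induced by simp_all
  have grow: "\<beta> v \<subseteq> ?\<beta> v" for v by auto
  show ?thesis
    unfolding tree_decomp_iff
  proof (intro conjI ballI)
    fix v assume "v \<in> verts t"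
    then show "?\<beta> v \<subseteq> verts g" using bags x by auto
  next
    fix y assume "y \<in> verts g"
    show "\<exists>v\<in>verts t. y \<in> ?\<beta> v"
    proof (cases "y = x")
      case True
      then show ?thesis using u(1) by auto
    next
      case False
      then obtain v where "v \<in> verts t" "y \<in> \<beta> v" using cover \<open>y \<in> verts g\<close> by blast
      then show ?thesis using grow by blast
    qed
  next
    fix e assume "e \<in> edges g"
    then consider "e \<subseteq> insert x (\<beta> u)" | "e \<in> edges (induced g (verts g - {x}))"
      using edge_cases_delete_vertex[OF wf, of e x] u(2) by blast
    then show "\<exists>v\<in>verts t. e \<subseteq> ?\<beta> v"
    proof cases
      case 1
      then show ?thesis using u(1) by auto
    next
      case 2
      then obtain v where "v \<in> verts t" "e \<subseteq> \<beta> v" using edge by blast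
      then show ?thesis using grow by blast
    qed
  next
    show "path_consistent t ?\<beta>"
      unfolding path_consistent_def
    proof (intro ballI impI subsetI)
      fix a v b y assume o: "on_path t a v b" and y: "y \<in> ?\<beta> a \<inter> ?\<beta> b"
      have abv: "a \<in> verts t" "v \<in> verts t" "b \<in> verts t" using on_path_in_verts[OF o] by simp_all
      show "y \<in> ?\<beta> v"
      proof (cases "y = x")
        case True
        have "x \<notin> \<beta> a" "x \<notin> \<beta> b" using bags abv by blast+
        then have "\<beta> a = \<beta> u" "\<beta> b = \<beta> u" using y True by (auto split: if_splits)
        then have "\<beta> u \<subseteq> \<beta> v" using path_consistentD[OF pc o] by simp
        then show ?thesis using maximal[OF abv(2)] True by simp
      next
        case False
        then have "y \<in> \<beta> a \<inter> \<beta> b" using y by (auto split: if_splits)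
        then show ?thesis using path_consistentD[OF pc o] grow by blast
      qed
    qed
  qed (rule t)
qed

lemma is_tree_singleton: "is_tree ({v}, {})"
  unfolding is_tree_def
proof (intro conjI)
  show "wf_graph ({v}, {})" "verts ({v}, {}) \<noteq> {}" unfolding wf_graph_def verts_def edges_def by simp_all
  have "is_path ({v}, {}) [v]" unfolding is_path_def verts_def by simp
  then show "connected_graph ({v}, {})" unfolding connected_graph_def verts_def by auto
  show "\<nexists>cs. is_cycle ({v}, {}) cs"
  proof
    assume "\<exists>cs. is_cycle ({v}, {}) cs"
    then obtain cs where "distinct cs" "set cs \<subseteq> {v}" "3 \<le> length cs"
      unfolding is_cycle_def verts_def by auto
    then show False using card_mono[of "{v}" "set cs"] distinct_card[of cs] by simp
  qed
qed

text \<open>Clique trees are built by eliminating a simplicial vertex \<open>x\<close>: its neighbourhood \<open>N\<close> is a clique of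
  \<open>g - x\<close>, hence lies in a bag \<open>\<beta> u\<close>. If \<open>\<beta> u = N\<close>, \<open>x\<close> joins every bag equal to \<open>N\<close>; otherwise
  \<open>N\<close> is no bag and a new leaf with bag \<open>N \<union> {x}\<close> is attached at \<open>u\<close>.\<close>

lemma chordal_has_clique_tree:
  "wf_graph g \<Longrightarrow> chordal g \<Longrightarrow> \<exists>t (\<beta> :: nat \<Rightarrow> 'a set). tree_decomp g (t, \<beta>) \<and> \<beta> ` verts t \<subseteq> MaxClq g"
proof (induction "card (verts g)" arbitrary: g rule: less_induct)
  case less
  note wf = less.prems(1) and ch = less.prems(2)
  show ?case
  proof (cases "verts g = {}")
    case True
    then have "edges g = {}" using wf unfolding wf_graph_def by fastforce
    then have "tree_decomp g (({0::nat}, {}), \<lambda>_. {})"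
      unfolding tree_decomp_iff path_consistent_def using is_tree_singleton True by simp
    moreover have "{} \<in> MaxClq g" unfolding MaxClq_def is_clique_def using True by auto
    ultimately show ?thesis by (intro exI[of _ "({0::nat}, {})"] exI[of _ "\<lambda>_. {}"]) (simp add: verts_def)
  next
    case False
    obtain x where x: "x \<in> verts g" "simplicial g x" by (rule chordal_has_simplicial_vertex[OF wf ch False])
    let ?g' = "induced g (verts g - {x})" and ?N = "{y. adj g x y}"
    have sub: "verts g - {x} \<subseteq> verts g" by blast
    have "finite (verts g)" using wf unfolding wf_graph_def by simp
    then have "card (verts ?g') < card (verts g)" unfolding verts_induced using x(1) by (rule card_Diff1_less)
    then obtain t and \<beta> :: "nat \<Rightarrow> 'a set" where td: "tree_decomp ?g' (t, \<beta>)" and bags: "\<beta> ` verts t \<subseteq> MaxClq ?g'"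
      using less.hyps wf_graph_induced[OF wf sub] chordal_induced[OF ch sub] by blast
    have "is_clique ?g' ?N" by (rule simplicial_neighbourhood_clique[OF wf x(2)])
    then obtain u where u: "u \<in> verts t" "?N \<subseteq> \<beta> u" using clique_in_bag[OF td] by blast
    have N_max: "insert x ?N \<in> MaxClq g" by (rule simplicial_closed_neighbourhood_MaxClq[OF wf x])
    have other_max: "\<beta> v \<in> MaxClq g" if "v \<in> verts t" "\<beta> v \<noteq> ?N" for v
      using MaxClq_of_delete_simplicial[OF wf x(2)] bags that by blast
    have bag_max: "\<not> \<beta> w \<subset> \<beta> v" if "v \<in> verts t" "w \<in> verts t" for v w
      using bags that unfolding MaxClq_def by blast
    show ?thesis
    proof (cases "\<beta> u = ?N")
      case True
      let ?\<beta> = "\<lambda>v. if \<beta> v = \<beta> u then insert x (\<beta> u) else \<beta> v"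
      have "tree_decomp g (t, ?\<beta>)"
        using tree_decomp_extend_bag[OF wf x(1) td u(1) True] bag_max u(1) by blast
      moreover have "?\<beta> ` verts t \<subseteq> MaxClq g" using N_max other_max True by auto
      ultimately show ?thesis by blast
    next
      case False
      define n where "n = Suc (Max (verts t))"
      have "finite (verts t)" using td unfolding tree_decomp_iff is_tree_def wf_graph_def by simp
      then have n: "n \<notin> verts t" unfolding n_def using Max_ge Suc_n_not_le_n by blast
      have "\<beta> v \<noteq> ?N" if "v \<in> verts t" for v
        using bag_max[OF u(1) that] u(2) False by blast
      then have "(\<beta>(n := insert x ?N)) ` verts (add_leaf t u n) \<subseteq> MaxClq g"
        using N_max other_max n by auto
      then show ?thesis using tree_decomp_add_leaf[OF wf x(1) td u n] by blast
    qed
  qed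
qed

lemma subsumed_if_bags_cliques:
  assumes cliques: "\<forall>B\<in>bags d'. is_clique g B" and td: "tree_decomp g (t, \<beta>)"
  shows "subsumed d' (t, \<beta>)"
  unfolding subsumed_def
proof
  fix B assume "B \<in> bags d'"
  then have "is_clique g B" using cliques by blast
  then obtain v where "v \<in> verts t" "B \<subseteq> \<beta> v" using clique_in_bag[OF td] by blast
  then show "\<exists>B'\<in>bags (t, \<beta>). B \<subseteq> B'" unfolding bags_def by auto
qed

lemma MaxClq_subset_bags:
  assumes td: "tree_decomp g (t, \<beta>)" and bags: "bags (t, \<beta>) \<subseteq> MaxClq g"
  shows "MaxClq g \<subseteq> bags (t, \<beta>)"
proof
  fix K assume K: "K \<in> MaxClq g"
  then have "is_clique g K" unfolding MaxClq_def by simp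
  then obtain v where v: "v \<in> verts t" "K \<subseteq> \<beta> v" using clique_in_bag[OF td] by blast
  then have bag: "\<beta> v \<in> bags (t, \<beta>)" unfolding bags_def by simp
  then have "is_clique g (\<beta> v)" using bags unfolding MaxClq_def by blast
  then have "\<not> K \<subset> \<beta> v" using K unfolding MaxClq_def by blast
  then have "K = \<beta> v" using v(2) by blast
  then show "K \<in> bags (t, \<beta>)" using bag by simp
qed

theorem proposition4:
  fixes g :: "'a graph" and d :: "'b graph \<times> ('b \<Rightarrow> 'a set)"
  assumes "wf_graph g" and "chordal g" and "proper g d"
  shows "bags d = MaxClq g"
proof -
  obtain t \<beta> where d: "d = (t, \<beta>)" by (cases d)
  have td: "tree_decomp g (t, \<beta>)"
    and not_strict: "\<not> (\<exists>d' :: nat graph \<times> (nat \<Rightarrow> 'a set). tree_decomp g d' \<and> strictly_subsumes d' d)"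
    using assms(3) unfolding proper_def d by auto
  obtain t' and \<beta>' :: "nat \<Rightarrow> 'a set" where ct: "tree_decomp g (t', \<beta>')" "bags (t', \<beta>') \<subseteq> MaxClq g"
    using chordal_has_clique_tree[OF assms(1,2)] unfolding bags_def by auto
  have "subsumed (t', \<beta>') (t, \<beta>)"
    using ct(2) td unfolding MaxClq_def by (intro subsumed_if_bags_cliques) auto
  then have "bags (t, \<beta>) \<subseteq> bags (t', \<beta>')"
    using not_strict ct(1) unfolding strictly_subsumes_def d by blast
  with ct(2) have "bags (t, \<beta>) \<subseteq> MaxClq g" by blast
  with MaxClq_subset_bags[OF td this] show ?thesis unfolding d by blast
qed

end
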